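(* Let $\Sigma=\{x_1,\dots,x_d\}$ be a finite alphabet, $\mathbf w$ a right-infinite word over $\Sigma$, and $A_{\mathbf w}$ its factor algebra over $\mathbb Q$. Let $x=x_1+\cdots+x_d\in A_{\mathbf w}$, let $n\ge 1$, and let $V_n$ be the $\mathbb Q$-span of the factors of $\mathbf w$ of length $n$. Define the linear map $\Phi_n:V_n\to A_{\mathbf w}$ by $\Phi_n(u)=ux-xu$. Then the kernel of $\Phi_n$ is one-dimensional, spanned by $x^n=\sum_{u\in\mathrm{Fac}(\mathbf w),\,|u|=n}u$. Consequently, if $W_{n+1}$ denotes the $\mathbb Q$-span of all $ab-ba$ with $a,b\in\mathrm{Fac}(\mathbf w)$, $|a|+|b|=n+1$, then $\dim W_{n+1}\ge \dim V_n-1$.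
   Context: $\mathrm{Fac}(\mathbf w)$ is the set of finite factors (contiguous blocks, including the empty word) of $\mathbf w$. The factor algebra $A_{\mathbf w}$ over $\mathbb Q$ is the $\mathbb Q$-vector space with basis $\mathrm{Fac}(\mathbf w)$, with multiplication defined on basis elements by $u\cdot v=uv$ (concatenation) if $uv\in\mathrm{Fac}(\mathbf w)$ and $u\cdot v=0$ otherwise, extended bilinearly. In this algebra $x^n$ equals the sum of all factors of $\mathbf w$ of length $n$. *)

theory Defs
  imports Complex_Main "HOL-Library.Function_Algebras"
begin

text \<open>Right-infinite words are functions nat => 'a.
  Fac w: the finite factors (including the empty word).\<close>
definition Fac :: "(nat \<Rightarrow> 'a) \<Rightarrow> 'a list set" where
  "Fac w = {u. \<exists>i. u = map w [i..<i + length u]}"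

text \<open>Elements of the factor algebra A_w over Q are finitely supported functions
  'a list => rat whose support lies in Fac w (coefficient of each basis factor).\<close>
definition facalg :: "(nat \<Rightarrow> 'a) \<Rightarrow> ('a list \<Rightarrow> rat) set" where
  "facalg w = {f. finite {u. f u \<noteq> 0} \<and> {u. f u \<noteq> 0} \<subseteq> Fac w}"

definition bas :: "'a list \<Rightarrow> ('a list \<Rightarrow> rat)" where
  "bas u = (\<lambda>s. if s = u then 1 else 0)"

text \<open>Multiplication: bilinear extension of u.v = uv if uv is a factor, 0 otherwise.\<close>
definition facmult :: "(nat \<Rightarrow> 'a) \<Rightarrow> ('a list \<Rightarrow> rat) \<Rightarrow> ('a list \<Rightarrow> rat) \<Rightarrow> ('a list \<Rightarrow> rat)" where
  "facmult w f g = (\<lambda>s. if s \<in> Fac w then (\<Sum>i\<le>length s. f (take i s) * g (drop i s)) else 0)"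

definition qscale :: "rat \<Rightarrow> ('a list \<Rightarrow> rat) \<Rightarrow> ('a list \<Rightarrow> rat)" where
  "qscale c f = (\<lambda>s. c * f s)"

text \<open>x^n = sum of all factors of length n (x = x^1 = sum of the letters).\<close>
definition xpow :: "(nat \<Rightarrow> 'a) \<Rightarrow> nat \<Rightarrow> ('a list \<Rightarrow> rat)" where
  "xpow w n = (\<lambda>s. if s \<in> Fac w \<and> length s = n then 1 else 0)"

definition Vspace :: "(nat \<Rightarrow> 'a) \<Rightarrow> nat \<Rightarrow> ('a list \<Rightarrow> rat) set" where
  "Vspace w n = {f \<in> facalg w. \<forall>u. f u \<noteq> 0 \<longrightarrow> length u = n}"

definition Phi :: "(nat \<Rightarrow> 'a) \<Rightarrow> ('a list \<Rightarrow> rat) \<Rightarrow> ('a list \<Rightarrow> rat)" where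
  "Phi w f = facmult w f (xpow w 1) - facmult w (xpow w 1) f"

definition Wspace :: "(nat \<Rightarrow> 'a) \<Rightarrow> nat \<Rightarrow> ('a list \<Rightarrow> rat) set" where
  "Wspace w m = module.span qscale
     {facmult w (bas a) (bas b) - facmult w (bas b) (bas a) | a b.
        a \<in> Fac w \<and> b \<in> Fac w \<and> length a + length b = m}"

end

theory Submission
  imports Defs
begin

text \<open>For a factor s of length n + 1, \<open>\<Phi>\<^sub>n(f)(s)\<close> is the coefficient of f at the
  length-n prefix of s minus its coefficient at the length-n suffix. So \<open>\<Phi>\<^sub>n f = 0\<close> forces f
  to take the same value on any two consecutive length-n windows of w; as every factor of
  length n is such a window, f is a multiple of \<open>x\<^sup>n\<close>. Hence \<open>\<Phi>\<^sub>n\<close> is injective on the span of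
  all basis factors of length n but one, and the images \<open>\<Phi>\<^sub>n(u) = \<Sum>\<^sub>a (ua - au)\<close> of these
  \<open>dim V\<^sub>n - 1\<close> factors (a ranging over the letters) are independent elements of \<open>W\<^sub>n\<^sub>+\<^sub>1\<close>.\<close>

lemma map_upt_in_Fac: "map w [i..<i + k] \<in> Fac w"
  by (auto simp: Fac_def)

lemma take_in_Fac:
  assumes "u \<in> Fac w" shows "take k u \<in> Fac w"
proof -
  obtain i where u: "u = map w [i..<i + length u]" using assms by (auto simp: Fac_def)
  have "take k u = map w [i..<i + min k (length u)]"
    by (subst u) (simp add: take_map min_def)
  then show ?thesis by (metis map_upt_in_Fac)
qed

lemma drop_in_Fac:
  assumes "u \<in> Fac w" shows "drop k u \<in> Fac w"
proof -
  obtain i where u: "u = map w [i..<i + length u]" using assms by (auto simp: Fac_def)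
  have "drop k u = map w [i + min k (length u)..<(i + min k (length u)) + (length u - k)]"
    by (subst u) (simp add: drop_map min_def)
  then show ?thesis by (metis map_upt_in_Fac)
qed

lemma set_Fac_subset:
  assumes "u \<in> Fac w" shows "set u \<subseteq> range w"
proof -
  obtain i where "u = map w [i..<i + length u]" using assms unfolding Fac_def by blast
  then show ?thesis by (metis image_mono set_map subset_UNIV)
qed

lemma finite_Fac_length_le:
  assumes "finite (range w)"
  shows "finite {u \<in> Fac w. length u \<le> n}"
proof (rule finite_subset[OF _ finite_lists_length_le[OF assms]])
  show "{u \<in> Fac w. length u \<le> n} \<subseteq> {xs. set xs \<subseteq> range w \<and> length xs \<le> n}"
    using set_Fac_subset by blast
qed

lemma finite_Fac_length_eq:
  assumes "finite (range w)"
  shows "finite {u \<in> Fac w. length u = n}"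
  by (rule finite_subset[OF _ finite_Fac_length_le[OF assms, where n = n]]) auto

lemma sum_apply: "sum g A x = (\<Sum>a\<in>A. g a x)"
  by (induct A rule: infinite_finite_induct) auto

interpretation qs: vector_space "qscale :: rat \<Rightarrow> ('a list \<Rightarrow> rat) \<Rightarrow> 'a list \<Rightarrow> rat"
  by unfold_locales (auto simp: qscale_def fun_eq_iff algebra_simps)

context vector_space
begin

lemma card_le_dim_span:
  assumes "finite T" and "independent S" and "S \<subseteq> span T"
  shows "card S \<le> dim (span T)"
proof -
  obtain B where B: "B \<subseteq> span T" "independent B" "span T \<subseteq> span B" "card B = dim (span T)"
    by (rule basis_exists)
  have "finite B" using independent_span_bound[OF assms(1) B(2)] B(1) by blast
  then show ?thesis
    using independent_span_bound[OF _ assms(2)] assms(3) B(3,4) by fastforce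
qed

end

lemma facmult_sum_right: "facmult w f (sum g A) = (\<Sum>a\<in>A. facmult w f (g a))"
  unfolding facmult_def by (auto simp: fun_eq_iff sum_apply sum_distrib_left intro: sum.swap)

lemma facmult_sum_left: "facmult w (sum g A) f = (\<Sum>a\<in>A. facmult w (g a) f)"
  unfolding facmult_def by (auto simp: fun_eq_iff sum_apply sum_distrib_right intro: sum.swap)

lemma facmult_xpow_1_right:
  assumes "s \<in> Fac w"
  shows "facmult w f (xpow w 1) s = (if s = [] then 0 else f (butlast s))"
proof -
  have "facmult w f (xpow w 1) s
      = (\<Sum>i\<le>length s. if i = length s - 1 \<and> s \<noteq> [] then f (take i s) else 0)"
    unfolding facmult_def using assms drop_in_Fac[OF assms]
    by (simp, intro sum.cong) (auto simp: xpow_def Suc_le_eq)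
  then show ?thesis by (cases "s = []") (auto simp: butlast_conv_take)
qed

lemma facmult_xpow_1_left:
  assumes "s \<in> Fac w"
  shows "facmult w (xpow w 1) f s = (if s = [] then 0 else f (tl s))"
proof -
  have "facmult w (xpow w 1) f s = (\<Sum>i\<le>length s. if i = 1 \<and> s \<noteq> [] then f (drop i s) else 0)"
    unfolding facmult_def using assms take_in_Fac[OF assms]
    by (simp, intro sum.cong) (auto simp: xpow_def min_def Suc_le_eq)
  then show ?thesis by (cases s) (auto simp: Suc_le_eq)
qed

lemma Phi_apply:
  "Phi w f s = (if s \<in> Fac w \<and> s \<noteq> [] then f (butlast s) - f (tl s) else 0)"
  using facmult_xpow_1_right[of s w f] facmult_xpow_1_left[of s w f]
  by (auto simp: Phi_def facmult_def)

lemma module_hom_Phi: "module_hom qscale qscale (Phi w)"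
  unfolding module_hom_iff
  by (auto simp: fun_eq_iff Phi_apply qscale_def algebra_simps qs.module_axioms)

lemma Phi_eq_0_imp_multiple_xpow:
  assumes supp: "\<And>u. f u \<noteq> 0 \<Longrightarrow> u \<in> Fac w \<and> length u = n" and "Phi w f = 0"
  shows "f = qscale (f (map w [0..<n])) (xpow w n)"
proof -
  have shift: "f (map w [k..<k + n]) = f (map w [Suc k..<Suc k + n])" for k
  proof -
    define s where "s = map w [k..<k + Suc n]"
    have "s \<in> Fac w" unfolding s_def by (rule map_upt_in_Fac)
    moreover have "s \<noteq> []" unfolding s_def by simp
    ultimately have "f (butlast s) = f (tl s)"
      using fun_cong[OF \<open>Phi w f = 0\<close>, of s] by (simp add: Phi_apply)
    moreover have "butlast s = map w [k..<k + n]" "tl s = map w [Suc k..<Suc k + n]"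
      unfolding s_def by (simp_all add: map_butlast[symmetric] map_tl[symmetric] tl_upt)
    ultimately show ?thesis by simp
  qed
  have const: "f (map w [k..<k + n]) = f (map w [0..<n])" for k
    by (induct k) (use shift in auto)
  show ?thesis
  proof
    fix u
    show "f u = qscale (f (map w [0..<n])) (xpow w n) u"
    proof (cases "u \<in> Fac w \<and> length u = n")
      case True
      then obtain i where "u = map w [i..<i + n]" by (auto simp: Fac_def)
      then show ?thesis using True const[of i] by (simp add: qscale_def xpow_def)
    next
      case False
      then show ?thesis using supp[of u] by (auto simp: qscale_def xpow_def)
    qed
  qed
qed

lemma Phi_xpow: "Phi w (qscale c (xpow w n)) = 0"
proof
  fix s
  have "butlast s \<in> Fac w \<and> tl s \<in> Fac w" if "s \<in> Fac w"
    using take_in_Fac[OF that, of "length s - 1"] drop_in_Fac[OF that, of "Suc 0"]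
    by (simp add: butlast_conv_take drop_Suc)
  then show "Phi w (qscale c (xpow w n)) s = 0 s"
    by (auto simp: Phi_apply qscale_def xpow_def)
qed

lemma qscale_xpow_in_Vspace:
  assumes "finite (range w)"
  shows "qscale c (xpow w n) \<in> Vspace w n"
proof -
  have "{u. qscale c (xpow w n) u \<noteq> 0} \<subseteq> {u \<in> Fac w. length u = n}"
    by (auto simp: qscale_def xpow_def)
  then show ?thesis using finite_Fac_length_eq[OF assms, where n = n]
    by (auto simp: Vspace_def facalg_def qscale_def xpow_def intro: finite_subset)
qed

lemma Vspace_Phi_kernel:
  assumes "finite (range w)"
  shows "{f \<in> Vspace w n. Phi w f = 0} = {qscale c (xpow w n) | c. True}"
proof
  show "{f \<in> Vspace w n. Phi w f = 0} \<subseteq> {qscale c (xpow w n) | c. True}"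
    using Phi_eq_0_imp_multiple_xpow[of _ w n] by (auto simp: Vspace_def facalg_def)
  show "{qscale c (xpow w n) | c. True} \<subseteq> {f \<in> Vspace w n. Phi w f = 0}"
    using qscale_xpow_in_Vspace[OF assms] Phi_xpow by blast
qed

lemma xpow_nonzero: "xpow w n \<noteq> 0"
proof
  assume "xpow w n = 0"
  then have "xpow w n (map w [0..<0 + n]) = 0" by simp
  then show False using map_upt_in_Fac[of w 0 n] by (simp add: xpow_def)
qed

lemma inj_bas: "inj bas"
  by (rule injI) (auto simp: bas_def fun_eq_iff split: if_splits)

lemma independent_bas: "\<not> qs.dependent (bas ` X)"
  unfolding qs.independent_explicit_module
proof (intro allI impI)
  fix T c v
  assume T: "finite T" "T \<subseteq> bas ` X" and lincomb: "(\<Sum>v\<in>T. qscale (c v) v) = 0" and "v \<in> T"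
  then obtain a where a: "v = bas a" by blast
  have "(\<Sum>v'\<in>T. qscale (c v') v') a = (\<Sum>v'\<in>T. if v' = v then c v' else 0)"
    unfolding sum_apply
  proof (rule sum.cong[OF refl])
    fix v' assume "v' \<in> T"
    then obtain b where "v' = bas b" using T(2) by blast
    then show "qscale (c v') v' a = (if v' = v then c v' else 0)"
      using a by (auto simp: qscale_def bas_def fun_eq_iff)
  qed
  then show "c v = 0" using lincomb T(1) \<open>v \<in> T\<close> by (simp add: sum.delta')
qed

lemma span_bas_subset: "qs.span (bas ` X) \<subseteq> {f. \<forall>u. f u \<noteq> 0 \<longrightarrow> u \<in> X}"
proof (rule qs.span_minimal)
  show "bas ` X \<subseteq> {f. \<forall>u. f u \<noteq> 0 \<longrightarrow> u \<in> X}" by (auto simp: bas_def split: if_splits)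
  show "qs.subspace {f. \<forall>u. f u \<noteq> 0 \<longrightarrow> u \<in> X}"
    by (auto simp: qs.subspace_def qscale_def) (metis add_0)
qed

lemma dim_Vspace:
  assumes "finite (range w)"
  shows "qs.dim (Vspace w n) = card {u \<in> Fac w. length u = n}"
proof (rule qs.dim_unique)
  let ?F = "{u \<in> Fac w. length u = n}"
  have fin: "finite ?F" using finite_Fac_length_eq[OF assms] .
  show "bas ` ?F \<subseteq> Vspace w n"
    by (auto simp: Vspace_def facalg_def bas_def split: if_splits)
  show "Vspace w n \<subseteq> qs.span (bas ` ?F)"
  proof
    fix f assume f: "f \<in> Vspace w n"
    have "(\<Sum>u\<in>?F. qscale (f u) (bas u)) s = f s" for s
    proof -
      have "(\<Sum>u\<in>?F. qscale (f u) (bas u)) s = (\<Sum>u\<in>?F. if s = u then f s else 0)"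
        unfolding sum_apply by (rule sum.cong) (auto simp: qscale_def bas_def)
      also have "\<dots> = f s"
        using f fin by (auto simp: Vspace_def facalg_def)
      finally show ?thesis .
    qed
    then have "f = (\<Sum>u\<in>?F. qscale (f u) (bas u))" by auto
    also have "\<dots> \<in> qs.span (bas ` ?F)"
      by (intro qs.span_sum qs.span_scale qs.span_base) auto
    finally show "f \<in> qs.span (bas ` ?F)" .
  qed
  show "\<not> qs.dependent (bas ` ?F)" by (rule independent_bas)
  show "card (bas ` ?F) = card ?F"
    by (rule card_image[OF inj_on_subset[OF inj_bas subset_UNIV]])
qed

lemma xpow_eq_sum_bas:
  assumes "finite {u \<in> Fac w. length u = k}"
  shows "xpow w k = (\<Sum>a\<in>{u \<in> Fac w. length u = k}. bas a)"
  using assms by (auto simp: fun_eq_iff sum_apply bas_def xpow_def)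

lemma Phi_bas_in_Wspace:
  assumes "finite (range w)" and "u \<in> Fac w" and "length u = n"
  shows "Phi w (bas u) \<in> Wspace w (n + 1)"
proof -
  let ?letters = "{a \<in> Fac w. length a = 1}"
  have "Phi w (bas u) = (\<Sum>a\<in>?letters. facmult w (bas u) (bas a) - facmult w (bas a) (bas u))"
    unfolding Phi_def xpow_eq_sum_bas[OF finite_Fac_length_eq[OF assms(1)]]
      facmult_sum_right facmult_sum_left sum_subtractf ..
  also have "\<dots> \<in> Wspace w (n + 1)"
    unfolding Wspace_def
  proof (rule qs.span_sum, rule qs.span_base, rule CollectI)
    fix a assume "a \<in> ?letters"
    with assms(2,3) show "\<exists>a' b. facmult w (bas u) (bas a) - facmult w (bas a) (bas u)
        = facmult w (bas a') (bas b) - facmult w (bas b) (bas a')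
        \<and> a' \<in> Fac w \<and> b \<in> Fac w \<and> length a' + length b = n + 1"
      by (intro exI[of _ u] exI[of _ a]) simp
  qed
  finally show ?thesis .
qed

lemma finite_Wspace_generators:
  assumes "finite (range w)"
  shows "finite {facmult w (bas a) (bas b) - facmult w (bas b) (bas a) | a b.
                  a \<in> Fac w \<and> b \<in> Fac w \<and> length a + length b = m}"
proof (rule finite_subset)
  let ?L = "{u \<in> Fac w. length u \<le> m}"
  show "{facmult w (bas a) (bas b) - facmult w (bas b) (bas a) | a b.
          a \<in> Fac w \<and> b \<in> Fac w \<and> length a + length b = m}
        \<subseteq> (\<lambda>(a, b). facmult w (bas a) (bas b) - facmult w (bas b) (bas a)) ` (?L \<times> ?L)"
    by fastforce
  show "finite ((\<lambda>(a, b). facmult w (bas a) (bas b) - facmult w (bas b) (bas a)) ` (?L \<times> ?L))"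
    using finite_Fac_length_le[OF assms, where n = m] by blast
qed

lemma inj_on_Phi_span:
  "inj_on (Phi w) (qs.span (bas ` ({u \<in> Fac w. length u = n} - {map w [0..<n]})))"
  unfolding module_hom.inj_on_iff_eq_0[OF module_hom_Phi qs.subspace_span]
proof (intro ballI impI)
  fix f
  assume "f \<in> qs.span (bas ` ({u \<in> Fac w. length u = n} - {map w [0..<n]}))" and "Phi w f = 0"
  then have supp: "f u \<noteq> 0 \<Longrightarrow> u \<in> Fac w \<and> length u = n \<and> u \<noteq> map w [0..<n]" for u
    using span_bas_subset by fastforce
  have "f = qscale (f (map w [0..<n])) (xpow w n)"
  proof (rule Phi_eq_0_imp_multiple_xpow)
    show "u \<in> Fac w \<and> length u = n" if "f u \<noteq> 0" for u
      using supp[OF that] by simp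
  qed fact
  also have "\<dots> = 0"
    using supp[of "map w [0..<n]"] by (auto simp: qscale_def fun_eq_iff)
  finally show "f = 0" .
qed

lemma dim_Vspace_le_dim_Wspace:
  assumes "finite (range w)"
  shows "qs.dim (Vspace w n) \<le> qs.dim (Wspace w (n + 1)) + 1"
proof -
  let ?F = "{u \<in> Fac w. length u = n}"
  let ?B = "bas ` (?F - {map w [0..<n]})"
  have "qs.independent (Phi w ` ?B)"
    by (rule module_hom.independent_injective_image[OF module_hom_Phi independent_bas inj_on_Phi_span])
  moreover have "Phi w ` ?B \<subseteq> Wspace w (n + 1)"
    using Phi_bas_in_Wspace[OF assms] by auto
  ultimately have "card (Phi w ` ?B) \<le> qs.dim (Wspace w (n + 1))"
    unfolding Wspace_def by (rule qs.card_le_dim_span[OF finite_Wspace_generators[OF assms]])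
  moreover have "card (Phi w ` ?B) = card ?F - 1"
  proof -
    have "card (Phi w ` ?B) = card ?B"
      using inj_on_subset[OF inj_on_Phi_span qs.span_superset] by (rule card_image)
    also have "\<dots> = card (?F - {map w [0..<n]})"
      by (rule card_image[OF inj_on_subset[OF inj_bas subset_UNIV]])
    also have "\<dots> = card ?F - 1"
      using finite_Fac_length_eq[OF assms] map_upt_in_Fac[of w 0 n] by simp
    finally show ?thesis .
  qed
  ultimately show ?thesis using dim_Vspace[OF assms, of n] by linarith
qed

theorem mainTheorem7:
  fixes w :: "nat \<Rightarrow> 'a" and \<Sigma> :: "'a set" and n :: nat
  assumes "finite \<Sigma>" and "\<And>i. w i \<in> \<Sigma>" and "n \<ge> 1"
  shows "{f \<in> Vspace w n. Phi w f = 0} = {qscale c (xpow w n) | c. True}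
         \<and> xpow w n \<noteq> 0
         \<and> int (vector_space.dim qscale (Wspace w (n + 1)))
             \<ge> int (vector_space.dim qscale (Vspace w n)) - 1"
proof -
  have "range w \<subseteq> \<Sigma>" using assms(2) by auto
  then have alphabet: "finite (range w)" using assms(1) by (rule finite_subset)
  have "qs.dim (Vspace w n) \<le> qs.dim (Wspace w (n + 1)) + 1"
    using dim_Vspace_le_dim_Wspace[OF alphabet] .
  then show ?thesis
    by (intro conjI Vspace_Phi_kernel[OF alphabet] xpow_nonzero) linarith
qed

end
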